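(* Let $P$ be a continuous poset and $M$ a persistence module over $P$. The following are equivalent: (i) $M$ is ephemeral; (ii) $\overline M=0$; (iii) $\underline M=0$.
   Context: Let $P$ be a poset. A subset is directed if nonempty and any two elements have an upper bound in it. $x\ll y$ ($x$ way below $y$) means: for every directed $D$ whose supremum exists with $y\le\sup D$, some $d\in D$ satisfies $x\le d$. $P$ is continuous if for each $p$ the set $\{x:x\ll p\}$ is directed with supremum $p$. $k$ is a commutative ring with unity; a persistence module over $P$ is a functor $M$ from $P$ (as a category) to $k$-modules. Define persistence modules $\underline M_p=\varprojlim_{x\gg p}M_x$ and $\overline M_p=\varinjlim_{x\ll p}M_x$. $M$ is ephemeral if $M(p\le q)=0$ for all $p\ll q$. *)

theory Defs
  imports Complex_Main
begin

definition directed :: "'p::order set \<Rightarrow> bool" where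
  "directed D \<longleftrightarrow> D \<noteq> {} \<and> (\<forall>x\<in>D. \<forall>y\<in>D. \<exists>z\<in>D. x \<le> z \<and> y \<le> z)"

definition is_sup :: "'p::order set \<Rightarrow> 'p \<Rightarrow> bool" where
  "is_sup D s \<longleftrightarrow> (\<forall>d\<in>D. d \<le> s) \<and> (\<forall>u. (\<forall>d\<in>D. d \<le> u) \<longrightarrow> s \<le> u)"

definition way_below :: "'p::order \<Rightarrow> 'p \<Rightarrow> bool" (infix "\<lless>" 50) where
  "x \<lless> y \<longleftrightarrow> (\<forall>D. directed D \<longrightarrow> (\<forall>s. is_sup D s \<longrightarrow> y \<le> s \<longrightarrow> (\<exists>d\<in>D. x \<le> d)))"

definition continuous_poset :: "'p::order itself \<Rightarrow> bool" where
  "continuous_poset _ \<longleftrightarrow>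
     (\<forall>p::'p. directed {x. x \<lless> p} \<and> is_sup {x. x \<lless> p} p)"

definition pers_module ::
  "('k::comm_ring_1 \<Rightarrow> 'v::ab_group_add \<Rightarrow> 'v) \<Rightarrow> ('p::order \<Rightarrow> 'v set) \<Rightarrow> ('p \<Rightarrow> 'p \<Rightarrow> 'v \<Rightarrow> 'v) \<Rightarrow> bool"
where
  "pers_module scale V f \<longleftrightarrow>
     module scale \<and>
     (\<forall>p. module.subspace scale (V p)) \<and>
     (\<forall>p q. p \<le> q \<longrightarrow>
        (\<forall>v\<in>V p. f p q v \<in> V q) \<and>
        (\<forall>v\<in>V p. \<forall>w\<in>V p. f p q (v + w) = f p q v + f p q w) \<and>
        (\<forall>c. \<forall>v\<in>V p. f p q (scale c v) = scale c (f p q v))) \<and>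
     (\<forall>p. \<forall>v\<in>V p. f p p v = v) \<and>
     (\<forall>p q r. p \<le> q \<longrightarrow> q \<le> r \<longrightarrow> (\<forall>v\<in>V p. f q r (f p q v) = f p r v))"

definition ephemeral ::
  "('p::order \<Rightarrow> 'v::zero set) \<Rightarrow> ('p \<Rightarrow> 'p \<Rightarrow> 'v \<Rightarrow> 'v) \<Rightarrow> bool" where
  "ephemeral V f \<longleftrightarrow> (\<forall>p q. p \<lless> q \<longrightarrow> (\<forall>v\<in>V p. f p q v = 0))"

section \<open>The limit lim_{x >> p} M_x (standard construction: compatible families)\<close>

definition lower_lim :: "('p::order \<Rightarrow> 'v::zero set) \<Rightarrow> ('p \<Rightarrow> 'p \<Rightarrow> 'v \<Rightarrow> 'v) \<Rightarrow> 'p \<Rightarrow> ('p \<Rightarrow> 'v) set"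
where
  "lower_lim V f p = {g. (\<forall>x. p \<lless> x \<longrightarrow> g x \<in> V x) \<and> (\<forall>x. \<not> p \<lless> x \<longrightarrow> g x = 0) \<and>
      (\<forall>x y. p \<lless> x \<longrightarrow> p \<lless> y \<longrightarrow> x \<le> y \<longrightarrow> f x y (g x) = g y)}"

definition lower_zero :: "('p::order \<Rightarrow> 'v::zero set) \<Rightarrow> ('p \<Rightarrow> 'p \<Rightarrow> 'v \<Rightarrow> 'v) \<Rightarrow> bool" where
  "lower_zero V f \<longleftrightarrow> (\<forall>p. lower_lim V f p = {\<lambda>_. 0})"

section \<open>The colimit colim_{x << p} M_x (standard construction: direct sum modulo relations)\<close>

definition colim_dsum :: "('p::order \<Rightarrow> 'v::zero set) \<Rightarrow> 'p \<Rightarrow> ('p \<Rightarrow> 'v) set" where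
  "colim_dsum V p = {g. (\<forall>x. g x \<in> V x) \<and> (\<forall>x. \<not> x \<lless> p \<longrightarrow> g x = 0) \<and> finite {x. g x \<noteq> 0}}"

inductive_set colim_rel ::
  "('k::comm_ring_1 \<Rightarrow> 'v::ab_group_add \<Rightarrow> 'v) \<Rightarrow> ('p::order \<Rightarrow> 'v set) \<Rightarrow> ('p \<Rightarrow> 'p \<Rightarrow> 'v \<Rightarrow> 'v) \<Rightarrow> 'p \<Rightarrow> ('p \<Rightarrow> 'v) set"
  for scale V f p
where
  rel_zero: "(\<lambda>_. 0) \<in> colim_rel scale V f p"
| rel_add: "a \<in> colim_rel scale V f p \<Longrightarrow> b \<in> colim_rel scale V f p \<Longrightarrow>
             (\<lambda>z. a z + b z) \<in> colim_rel scale V f p"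
| rel_scale: "a \<in> colim_rel scale V f p \<Longrightarrow> (\<lambda>z. scale c (a z)) \<in> colim_rel scale V f p"
| rel_gen: "x \<lless> p \<Longrightarrow> y \<lless> p \<Longrightarrow> x \<le> y \<Longrightarrow> m \<in> V x \<Longrightarrow>
             (\<lambda>z. (if z = x then m else 0) - (if z = y then f x y m else 0)) \<in> colim_rel scale V f p"

text \<open>overline M = 0: every quotient (direct sum)/(relations) is zero, i.e. the direct
  sum is contained in the relation submodule.\<close>
definition upper_zero ::
  "('k::comm_ring_1 \<Rightarrow> 'v::ab_group_add \<Rightarrow> 'v) \<Rightarrow> ('p::order \<Rightarrow> 'v set) \<Rightarrow> ('p \<Rightarrow> 'p \<Rightarrow> 'v \<Rightarrow> 'v) \<Rightarrow> bool"
where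
  "upper_zero scale V f \<longleftrightarrow> (\<forall>p. colim_dsum V p \<subseteq> colim_rel scale V f p)"

end

theory Submission imports Defs begin

text \<open>If \<open>M\<close> is ephemeral, interpolation \<open>x \<lless> y \<lless> p\<close> shows that every element of a stage
  \<open>x \<lless> p\<close> dies on its way to some stage \<open>y \<lless> p\<close>: hence every generator \<open>\<delta>\<^sub>x(m)\<close> of the
  colimit is a relation, and every compatible family of the limit over \<open>x \<gg> p\<close> vanishes.
  Conversely, for \<open>p \<lless> q\<close> the family \<open>x \<mapsto> M(p \<le> x) m\<close> lies in the limit at \<open>p\<close>, so it
  vanishes at \<open>q\<close>; and every relation of the colimit at \<open>q\<close> is annihilated by pushing its
  finitely many components to a common stage \<open>w \<lless> q\<close>, so if \<open>\<delta>\<^sub>p(m)\<close> is a relation then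
  \<open>M(p \<le> u) m = 0\<close> for some \<open>u \<lless> q\<close>, whence \<open>M(p \<le> q) m = 0\<close>.\<close>

lemma way_below_imp_le: "x \<lless> y \<Longrightarrow> x \<le> (y::'p::order)"
proof -
  assume "x \<lless> y"
  moreover have "directed {y}" by (simp add: directed_def)
  moreover have "is_sup {y} y" by (simp add: is_sup_def)
  ultimately show ?thesis unfolding way_below_def by auto
qed

lemma le_way_below_le_trans: "x \<le> x' \<Longrightarrow> x' \<lless> y \<Longrightarrow> y \<le> y' \<Longrightarrow> x \<lless> (y'::'p::order)"
  unfolding way_below_def by (meson order_trans)

context
  assumes cont: "continuous_poset TYPE('p::order)"
begin

lemma way_below_directed: "directed {x. x \<lless> (p::'p)}"
  using cont unfolding continuous_poset_def by blast

lemma way_below_is_sup: "is_sup {x. x \<lless> (p::'p)} p"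
  using cont unfolding continuous_poset_def by blast

lemma ex_way_below: "\<exists>x. x \<lless> (p::'p)"
  using way_below_directed unfolding directed_def by auto

lemma way_below_upper_bound:
  "x \<lless> (p::'p) \<Longrightarrow> y \<lless> p \<Longrightarrow> \<exists>z. z \<lless> p \<and> x \<le> z \<and> y \<le> z"
  using way_below_directed unfolding directed_def by blast

lemma way_below_interpolate:
  assumes "x \<lless> (p::'p)"
  shows "\<exists>z. x \<lless> z \<and> z \<lless> p"
proof -
  define D where "D = {y. \<exists>z. y \<lless> z \<and> z \<lless> p}"
  have "directed D"
    unfolding directed_def
  proof
    obtain z y where "z \<lless> p" "y \<lless> z" using ex_way_below by blast
    then show "D \<noteq> {}" unfolding D_def by auto
  next
    show "\<forall>y1\<in>D. \<forall>y2\<in>D. \<exists>y\<in>D. y1 \<le> y \<and> y2 \<le> y"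
    proof (intro ballI)
      fix y1 y2 assume "y1 \<in> D" "y2 \<in> D"
      then obtain z1 z2 where "y1 \<lless> z1" "z1 \<lless> p" "y2 \<lless> z2" "z2 \<lless> p"
        unfolding D_def by auto
      moreover obtain z where "z \<lless> p" "z1 \<le> z" "z2 \<le> z"
        using way_below_upper_bound \<open>z1 \<lless> p\<close> \<open>z2 \<lless> p\<close> by blast
      ultimately have "y1 \<lless> z" "y2 \<lless> z" "z \<lless> p"
        using le_way_below_le_trans by blast+
      then obtain y where "y \<lless> z" "y1 \<le> y" "y2 \<le> y"
        using way_below_upper_bound by blast
      then show "\<exists>y\<in>D. y1 \<le> y \<and> y2 \<le> y" using \<open>z \<lless> p\<close> unfolding D_def by auto
    qed
  qed
  moreover have "is_sup D p"
    unfolding is_sup_def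
  proof (intro conjI allI impI ballI)
    fix d assume "d \<in> D"
    then show "d \<le> p" unfolding D_def using way_below_imp_le order_trans by blast
  next
    fix u assume u: "\<forall>d\<in>D. d \<le> u"
    have "z \<le> u" if "z \<lless> p" for z
    proof -
      have "\<forall>d\<in>{x. x \<lless> z}. d \<le> u" using u that unfolding D_def by blast
      then show "z \<le> u" using way_below_is_sup[of z] unfolding is_sup_def by blast
    qed
    then show "p \<le> u" using way_below_is_sup[of p] unfolding is_sup_def by blast
  qed
  ultimately obtain d where "d \<in> D" "x \<le> d"
    using assms unfolding way_below_def by blast
  then show ?thesis unfolding D_def using le_way_below_le_trans by blast
qed

end

locale persistence_module =
  fixes scale :: "'k::comm_ring_1 \<Rightarrow> 'v::ab_group_add \<Rightarrow> 'v"
    and V :: "'p::order \<Rightarrow> 'v set"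
    and f :: "'p \<Rightarrow> 'p \<Rightarrow> 'v \<Rightarrow> 'v"
  assumes pers_module: "pers_module scale V f"
begin

lemmas pers_module_unfolded = pers_module[unfolded pers_module_def]

lemma module: "module scale"
  using pers_module_unfolded by (rule conjunct1)

lemma subspace: "module.subspace scale (V p)"
  using pers_module_unfolded[THEN conjunct2, THEN conjunct1] by (rule spec)

lemma map_linear:
  "p \<le> q \<Longrightarrow> (\<forall>v\<in>V p. f p q v \<in> V q) \<and>
     (\<forall>v\<in>V p. \<forall>w\<in>V p. f p q (v + w) = f p q v + f p q w) \<and>
     (\<forall>c. \<forall>v\<in>V p. f p q (scale c v) = scale c (f p q v))"
  using pers_module_unfolded[THEN conjunct2, THEN conjunct2, THEN conjunct1] by blast

lemma map_in: "p \<le> q \<Longrightarrow> v \<in> V p \<Longrightarrow> f p q v \<in> V q"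
  using map_linear by blast

lemma map_add: "p \<le> q \<Longrightarrow> v \<in> V p \<Longrightarrow> w \<in> V p \<Longrightarrow> f p q (v + w) = f p q v + f p q w"
  using map_linear by blast

lemma map_scale: "p \<le> q \<Longrightarrow> v \<in> V p \<Longrightarrow> f p q (scale c v) = scale c (f p q v)"
  using map_linear by blast

lemma map_id: "v \<in> V p \<Longrightarrow> f p p v = v"
  using pers_module_unfolded[THEN conjunct2, THEN conjunct2, THEN conjunct2, THEN conjunct1] by blast

lemma map_comp: "p \<le> q \<Longrightarrow> q \<le> r \<Longrightarrow> v \<in> V p \<Longrightarrow> f q r (f p q v) = f p r v"
  using pers_module_unfolded[THEN conjunct2, THEN conjunct2, THEN conjunct2, THEN conjunct2] by blast

lemma zero_in: "0 \<in> V p"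
  using module.subspace_0[OF module subspace] .

lemma add_in: "a \<in> V p \<Longrightarrow> b \<in> V p \<Longrightarrow> a + b \<in> V p"
  using module.subspace_add[OF module subspace] .

lemma diff_in: "a \<in> V p \<Longrightarrow> b \<in> V p \<Longrightarrow> a - b \<in> V p"
  using module.subspace_diff[OF module subspace] .

lemma scale_in: "a \<in> V p \<Longrightarrow> scale c a \<in> V p"
  using module.subspace_scale[OF module subspace] .

lemma map_zero: "p \<le> q \<Longrightarrow> f p q 0 = 0"
  using map_add[of p q 0 0] zero_in[of p] by simp

lemma map_diff: "p \<le> q \<Longrightarrow> v \<in> V p \<Longrightarrow> w \<in> V p \<Longrightarrow> f p q (v - w) = f p q v - f p q w"
  using map_add[of p q "v - w" w] diff_in[of v p w] by (simp add: algebra_simps)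

lemma map_sum:
  assumes "\<forall>x\<in>T. x \<le> w" "\<forall>x. a x \<in> V x" "\<forall>x. b x \<in> V x"
  shows "(\<Sum>x\<in>T. f x w (a x + b x)) = (\<Sum>x\<in>T. f x w (a x)) + (\<Sum>x\<in>T. f x w (b x))"
  using assms map_add by (simp add: sum.distrib)

lemma lower_zero_imp_ephemeral: "lower_zero V f \<Longrightarrow> ephemeral V f"
  unfolding ephemeral_def
proof (intro allI impI ballI)
  fix p q m assume "lower_zero V f" "p \<lless> q" "m \<in> V p"
  define g where "g = (\<lambda>x. if p \<lless> x then f p x m else 0)"
  have "g \<in> lower_lim V f p"
    unfolding lower_lim_def g_def
    using \<open>m \<in> V p\<close> by (auto intro: map_in map_comp way_below_imp_le)
  with \<open>lower_zero V f\<close> have "g q = 0" unfolding lower_zero_def by auto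
  with \<open>p \<lless> q\<close> show "f p q m = 0" unfolding g_def by simp
qed

lemma ephemeral_imp_lower_zero:
  assumes cont: "continuous_poset TYPE('p)" and eph: "ephemeral V f"
  shows "lower_zero V f"
  unfolding lower_zero_def
proof (intro allI equalityI subsetI)
  fix p g assume g: "g \<in> lower_lim V f p"
  have "g x = 0" if "p \<lless> x" for x
  proof -
    obtain y where "p \<lless> y" "y \<lless> x"
      using way_below_interpolate[OF cont \<open>p \<lless> x\<close>] by blast
    then have "g x = f y x (g y)"
      using g \<open>p \<lless> x\<close> way_below_imp_le[OF \<open>y \<lless> x\<close>] unfolding lower_lim_def by auto
    also have "\<dots> = 0"
      using eph g \<open>p \<lless> y\<close> \<open>y \<lless> x\<close> unfolding ephemeral_def lower_lim_def by auto
    finally show ?thesis .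
  qed
  with g have "g = (\<lambda>_. 0)" unfolding lower_lim_def by auto
  then show "g \<in> {\<lambda>_. 0}" by simp
next
  fix p and g :: "'p \<Rightarrow> 'v" assume "g \<in> {\<lambda>_. 0}"
  then show "g \<in> lower_lim V f p" unfolding lower_lim_def using zero_in map_zero by auto
qed

lemma delta_in_colim_rel:
  assumes cont: "continuous_poset TYPE('p)" and eph: "ephemeral V f"
    and "x \<lless> p" "m \<in> V x"
  shows "(\<lambda>z. if z = x then m else 0) \<in> colim_rel scale V f p"
proof -
  obtain y where "x \<lless> y" "y \<lless> p" using way_below_interpolate[OF cont \<open>x \<lless> p\<close>] by blast
  then have "(\<lambda>z. (if z = x then m else 0) - (if z = y then f x y m else 0)) \<in> colim_rel scale V f p"
    using assms way_below_imp_le by (intro rel_gen) auto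
  moreover have "f x y m = 0"
    using eph \<open>x \<lless> y\<close> \<open>m \<in> V x\<close> unfolding ephemeral_def by auto
  then have "(\<lambda>z. (if z = x then m else 0) - (if z = y then f x y m else 0)) = (\<lambda>z. if z = x then m else 0)"
    by auto
  ultimately show ?thesis by simp
qed

lemma finite_support_in_colim_rel:
  assumes cont: "continuous_poset TYPE('p)" and eph: "ephemeral V f"
    and "finite S" "\<forall>x\<in>S. x \<lless> p"
  shows "(\<forall>x. g x \<noteq> 0 \<longrightarrow> x \<in> S) \<Longrightarrow> (\<forall>x. g x \<in> V x) \<Longrightarrow> g \<in> colim_rel scale V f p"
  using assms(3,4)
proof (induction S arbitrary: g rule: finite_induct)
  case empty
  then have "g = (\<lambda>_. 0)" by auto
  then show ?case by (simp add: rel_zero)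
next
  case (insert a S)
  have "g(a := 0) \<in> colim_rel scale V f p"
    using insert.prems zero_in by (intro insert.IH) auto
  moreover have "(\<lambda>z. if z = a then g a else 0) \<in> colim_rel scale V f p"
    using delta_in_colim_rel[OF cont eph] insert.prems by auto
  ultimately have "(\<lambda>z. (g(a := 0)) z + (if z = a then g a else 0)) \<in> colim_rel scale V f p"
    by (rule rel_add)
  moreover have "(\<lambda>z. (g(a := 0)) z + (if z = a then g a else 0)) = g" by auto
  ultimately show ?case by simp
qed

lemma ephemeral_imp_upper_zero:
  assumes "continuous_poset TYPE('p)" "ephemeral V f"
  shows "upper_zero scale V f"
  unfolding upper_zero_def colim_dsum_def
  using finite_support_in_colim_rel[OF assms] by blast

text \<open>The finite family \<open>g\<close>, supported below \<open>u \<lless> q\<close>, represents zero already at every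
  stage \<open>w\<close> with \<open>u \<le> w \<lless> q\<close>.\<close>
definition vanishes_below :: "'p \<Rightarrow> ('p \<Rightarrow> 'v) \<Rightarrow> bool" where
  "vanishes_below q g \<longleftrightarrow> (\<exists>u T. finite T \<and> u \<lless> q \<and> (\<forall>x\<in>T. x \<le> u) \<and>
     (\<forall>x. x \<notin> T \<longrightarrow> g x = 0) \<and> (\<forall>x. g x \<in> V x) \<and>
     (\<forall>w. u \<le> w \<longrightarrow> w \<lless> q \<longrightarrow> (\<Sum>x\<in>T. f x w (g x)) = 0))"

lemma vanishes_below_add:
  assumes cont: "continuous_poset TYPE('p)"
    and "vanishes_below q a" "vanishes_below q b"
  shows "vanishes_below q (\<lambda>z. a z + b z)"
proof -
  obtain ua Ta where A: "finite Ta" "ua \<lless> q" "\<forall>x\<in>Ta. x \<le> ua" "\<forall>x. x \<notin> Ta \<longrightarrow> a x = 0"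
     "\<forall>x. a x \<in> V x" "\<forall>w. ua \<le> w \<longrightarrow> w \<lless> q \<longrightarrow> (\<Sum>x\<in>Ta. f x w (a x)) = 0"
    using assms(2) unfolding vanishes_below_def by blast
  obtain ub Tb where B: "finite Tb" "ub \<lless> q" "\<forall>x\<in>Tb. x \<le> ub" "\<forall>x. x \<notin> Tb \<longrightarrow> b x = 0"
     "\<forall>x. b x \<in> V x" "\<forall>w. ub \<le> w \<longrightarrow> w \<lless> q \<longrightarrow> (\<Sum>x\<in>Tb. f x w (b x)) = 0"
    using assms(3) unfolding vanishes_below_def by blast
  obtain u where u: "u \<lless> q" "ua \<le> u" "ub \<le> u"
    using way_below_upper_bound[OF cont A(2) B(2)] by blast
  let ?T = "Ta \<union> Tb"
  have T_le: "\<forall>x\<in>?T. x \<le> u" using A(3) B(3) u order_trans by blast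
  have "(\<Sum>x\<in>?T. f x w (a x + b x)) = 0" if "u \<le> w" "w \<lless> q" for w
  proof -
    have le: "\<forall>x\<in>?T. x \<le> w" using T_le that order_trans by blast
    have "(\<Sum>x\<in>?T. f x w (a x + b x)) = (\<Sum>x\<in>?T. f x w (a x)) + (\<Sum>x\<in>?T. f x w (b x))"
      using le A(5) B(5) by (rule map_sum)
    also have "(\<Sum>x\<in>?T. f x w (a x)) = (\<Sum>x\<in>Ta. f x w (a x))"
      using A(1) B(1) A(4) le map_zero by (intro sum.mono_neutral_right) auto
    also have "(\<Sum>x\<in>?T. f x w (b x)) = (\<Sum>x\<in>Tb. f x w (b x))"
      using A(1) B(1) B(4) le map_zero by (intro sum.mono_neutral_right) auto
    finally show ?thesis using A(6) B(6) u that order_trans by auto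
  qed
  then show ?thesis
    unfolding vanishes_below_def using A B u T_le add_in by (intro exI[of _ u] exI[of _ ?T]) auto
qed

lemma vanishes_below_scale:
  assumes "vanishes_below q a"
  shows "vanishes_below q (\<lambda>z. scale c (a z))"
proof -
  obtain u T where A: "finite T" "u \<lless> q" "\<forall>x\<in>T. x \<le> u" "\<forall>x. x \<notin> T \<longrightarrow> a x = 0"
     "\<forall>x. a x \<in> V x" "\<forall>w. u \<le> w \<longrightarrow> w \<lless> q \<longrightarrow> (\<Sum>x\<in>T. f x w (a x)) = 0"
    using assms unfolding vanishes_below_def by blast
  have "(\<Sum>x\<in>T. f x w (scale c (a x))) = 0" if "u \<le> w" "w \<lless> q" for w
  proof -
    have "(\<Sum>x\<in>T. f x w (scale c (a x))) = (\<Sum>x\<in>T. scale c (f x w (a x)))"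
      using A(3,5) that map_scale order_trans by (intro sum.cong) blast+
    also have "\<dots> = scale c (\<Sum>x\<in>T. f x w (a x))"
      using module.scale_sum_right[OF module] by metis
    finally show ?thesis using A(6) that module.scale_zero_right[OF module] by simp
  qed
  then show ?thesis
    unfolding vanishes_below_def using A scale_in module.scale_zero_right[OF module]
    by (intro exI[of _ u] exI[of _ T]) auto
qed

lemma vanishes_below_gen:
  assumes "x \<lless> q" "y \<lless> q" "x \<le> y" "m \<in> V x"
  shows "vanishes_below q (\<lambda>z. (if z = x then m else 0) - (if z = y then f x y m else 0))"
    (is "vanishes_below q ?g")
proof -
  have "\<forall>z. ?g z \<in> V z" using assms zero_in diff_in map_in by auto
  moreover have "(\<Sum>z\<in>{x, y}. f z w (?g z)) = 0" if "y \<le> w" for w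
  proof (cases "x = y")
    case True
    then show ?thesis using assms map_id map_zero that by simp
  next
    case False
    then have "(\<Sum>z\<in>{x, y}. f z w (?g z)) = f x w m + f y w (0 - f x y m)" by simp
    also have "\<dots> = 0"
      using map_diff[of y w 0 "f x y m"] map_zero zero_in map_in[OF \<open>x \<le> y\<close> \<open>m \<in> V x\<close>]
        map_comp[OF \<open>x \<le> y\<close> that \<open>m \<in> V x\<close>] that by simp
    finally show ?thesis .
  qed
  ultimately show ?thesis
    unfolding vanishes_below_def using assms by (intro exI[of _ y] exI[of _ "{x, y}"]) auto
qed

lemma colim_rel_imp_vanishes_below:
  assumes cont: "continuous_poset TYPE('p)"
  shows "g \<in> colim_rel scale V f q \<Longrightarrow> vanishes_below q g"
proof (induction rule: colim_rel.induct)
  case rel_zero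
  obtain u where "u \<lless> q" using ex_way_below[OF cont] by blast
  then show ?case
    unfolding vanishes_below_def using zero_in by (intro exI[of _ u] exI[of _ "{}"]) auto
next
  case rel_add
  then show ?case using vanishes_below_add[OF cont] by blast
next
  case rel_scale
  then show ?case using vanishes_below_scale by blast
next
  case rel_gen
  then show ?case using vanishes_below_gen by blast
qed

lemma upper_zero_imp_ephemeral:
  assumes cont: "continuous_poset TYPE('p)" and "upper_zero scale V f"
  shows "ephemeral V f"
  unfolding ephemeral_def
proof (intro allI impI ballI)
  fix p q m assume "p \<lless> q" "m \<in> V p"
  show "f p q m = 0"
  proof (cases "m = 0")
    case True
    then show ?thesis using map_zero way_below_imp_le[OF \<open>p \<lless> q\<close>] by simp
  next
    case False
    let ?d = "\<lambda>z. if z = p then m else 0"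
    have "?d \<in> colim_dsum V q"
      unfolding colim_dsum_def using \<open>m \<in> V p\<close> zero_in \<open>p \<lless> q\<close> by auto
    then have "vanishes_below q ?d"
      using assms colim_rel_imp_vanishes_below unfolding upper_zero_def by blast
    then obtain u T where A: "finite T" "u \<lless> q" "\<forall>x\<in>T. x \<le> u" "\<forall>x. x \<notin> T \<longrightarrow> ?d x = 0"
        "(\<Sum>x\<in>T. f x u (?d x)) = 0"
      unfolding vanishes_below_def by blast
    have "p \<in> T" using A(4) False by auto
    have "f p u m = (\<Sum>x\<in>T. f x u (?d x))"
      using A(1,3) \<open>p \<in> T\<close> map_zero by (subst sum.remove[of T p]) auto
    then have "f p u m = 0" using A(5) by simp
    moreover have "f p q m = f u q (f p u m)"
      using map_comp A(3) \<open>p \<in> T\<close> way_below_imp_le[OF A(2)] \<open>m \<in> V p\<close> by simp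
    ultimately show ?thesis using map_zero way_below_imp_le[OF A(2)] by simp
  qed
qed

end

theorem mainTheorem6:
  fixes scale :: "'k::comm_ring_1 \<Rightarrow> 'v::ab_group_add \<Rightarrow> 'v"
    and V :: "'p::order \<Rightarrow> 'v set"
    and f :: "'p \<Rightarrow> 'p \<Rightarrow> 'v \<Rightarrow> 'v"
  assumes "continuous_poset TYPE('p)"
    and "pers_module scale V f"
  shows "(ephemeral V f \<longleftrightarrow> upper_zero scale V f) \<and> (ephemeral V f \<longleftrightarrow> lower_zero V f)"
proof -
  interpret persistence_module scale V f by standard (fact assms(2))
  show ?thesis
    using ephemeral_imp_upper_zero upper_zero_imp_ephemeral
      ephemeral_imp_lower_zero lower_zero_imp_ephemeral assms(1) by blast
qed

end
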